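(* Fix $0<d<1$. Let $A$ be an $m\times n$ matrix which is a sub-matrix (consisting of $n$ of the columns) of some $m\times m$ orthonormal matrix, and such that all rows of $A$ have equal $\ell^2$ norm. Then there exists a subset $J\subset\{1,\dots,m\}$ with $|J|\ge(1-d)n$ such that \[ C(d)\,\frac{n}{m}\,\|w\|^2\le \|A(J)^{\mathrm{T}}w\|_{\ell_2^n}^2\qquad\text{for all } w\in\ell_2(J), \] where $C(d)=(1-\sqrt{1-d})^2$.
   Context: $\ell_2^n$ is the $n$-dimensional space with Euclidean norm $\|(a_r)\|^2=\sum|a_r|^2$. For $J\subset\{1,\dots,m\}$, $\ell_2(J)$ is the $|J|$-dimensional coordinate subspace of $\ell_2^m$ indexed by $J$, $A(J)$ is the sub-matrix of $A$ consisting of the rows with indices in $J$, and $A(J)^{\mathrm{T}}$ is its transpose. $|J|$ is the cardinality of $J$. *)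

theory Defs
  imports "HOL-Analysis.Analysis"
begin

definition Cd :: "real \<Rightarrow> real" where
  "Cd d = (1 - sqrt (1 - d))^2"

definition is_column_submatrix_of_orthogonal :: "real^'n^'m \<Rightarrow> bool" where
  "is_column_submatrix_of_orthogonal A \<longleftrightarrow>
     (\<exists>(Q::real^'m^'m) (\<sigma>::'n \<Rightarrow> 'm). orthogonal_matrix Q \<and> inj \<sigma> \<and>
        (\<forall>i j. A $ i $ j = Q $ i $ \<sigma> j))"

end

theory Submission
  imports Defs
begin

text \<open>Let \<open>P = A A\<^sup>T\<close>, the orthogonal projection of trace \<open>n\<close> onto the column space of
  \<open>A\<close>; since \<open>\<parallel>A\<^sup>T w\<parallel>\<^sup>2 = w\<^sup>T P w\<close>, we need a principal submatrix \<open>P\<^sub>J\<close> with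
  \<open>P\<^sub>J \<ge> C(d) (n/m) I\<close>. This is the barrier argument of Spielman and Srivastava for restricted
  invertibility: indices are added one at a time while a lower barrier \<open>b\<close> with \<open>P\<^sub>J - b I\<close>
  positive definite moves down by a fixed step \<open>\<delta>\<close>. Averaging the Schur complements of all
  \<open>m\<close> candidate indices, using \<open>P\<^sup>2 = P\<close> and \<open>tr P = n\<close>, shows that some index keeps the
  potential \<open>tr (P\<^sub>J - b I)\<^sup>-\<^sup>1 - (n - |J|)/b\<close> bounded, and after \<open>(1 - d) n\<close> steps the
  barrier is still at least \<open>(1 - \<surd>(1 - d))\<^sup>2 n/m\<close>.\<close>

section \<open>Matrices indexed by a finite set\<close>

definition sym_matrix :: "('a \<Rightarrow> 'a \<Rightarrow> real) \<Rightarrow> bool" where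
  "sym_matrix X \<longleftrightarrow> (\<forall>i j. X i j = X j i)"

definition inverse_on :: "'a set \<Rightarrow> ('a \<Rightarrow> 'a \<Rightarrow> real) \<Rightarrow> ('a \<Rightarrow> 'a \<Rightarrow> real) \<Rightarrow> bool" where
  "inverse_on J X Y \<longleftrightarrow>
     (\<forall>i\<in>J. \<forall>j\<in>J. (\<Sum>k\<in>J. X i k * Y k j) = (if i = j then 1 else 0))"

definition quad_form :: "'a set \<Rightarrow> ('a \<Rightarrow> 'a \<Rightarrow> real) \<Rightarrow> ('a \<Rightarrow> real) \<Rightarrow> real" where
  "quad_form J X w = (\<Sum>i\<in>J. \<Sum>j\<in>J. w i * X i j * w j)"

definition pos_def_on :: "'a set \<Rightarrow> ('a \<Rightarrow> 'a \<Rightarrow> real) \<Rightarrow> bool" where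
  "pos_def_on J X \<longleftrightarrow> (\<forall>w. (\<exists>i\<in>J. w i \<noteq> 0) \<longrightarrow> 0 < quad_form J X w)"

definition pos_semidef_on :: "'a set \<Rightarrow> ('a \<Rightarrow> 'a \<Rightarrow> real) \<Rightarrow> bool" where
  "pos_semidef_on J X \<longleftrightarrow> (\<forall>w. 0 \<le> quad_form J X w)"

lemma sum_delta_mult [simp]:
  "finite J \<Longrightarrow> i \<in> J \<Longrightarrow> (\<Sum>k\<in>J. (if i = k then 1 else 0) * f k) = (f i :: real)"
  by (simp add: if_distrib[of "\<lambda>x. x * _"] cong: if_cong)

lemma sum_mult_delta [simp]:
  "finite J \<Longrightarrow> k \<in> J \<Longrightarrow> (\<Sum>j\<in>J. f j * (if j = k then 1 else 0)) = (f k :: real)"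
  by (simp add: if_distrib[of "\<lambda>x. _ * x"] cong: if_cong)

lemma inverse_onD:
  "inverse_on J X Y \<Longrightarrow> i \<in> J \<Longrightarrow> j \<in> J \<Longrightarrow> (\<Sum>k\<in>J. X i k * Y k j) = (if i = j then 1 else 0)"
  unfolding inverse_on_def by blast

lemma inverse_on_left:
  assumes "inverse_on J X Y" "sym_matrix X" "sym_matrix Y" "i \<in> J" "j \<in> J"
  shows "(\<Sum>k\<in>J. Y i k * X k j) = (if i = j then 1 else 0)"
proof -
  have "(\<Sum>k\<in>J. Y i k * X k j) = (\<Sum>k\<in>J. X j k * Y k i)"
    using assms(2,3) unfolding sym_matrix_def by (simp add: mult.commute)
  then show ?thesis
    using inverse_onD[OF assms(1,5,4)] by auto
qed

lemma quad_form_cong: "(\<And>k. k \<in> J \<Longrightarrow> w k = v k) \<Longrightarrow> quad_form J X w = quad_form J X v"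
  unfolding quad_form_def by (intro sum.cong refl) auto

lemma quad_form_zero: "(\<And>k. k \<in> J \<Longrightarrow> w k = 0) \<Longrightarrow> quad_form J X w = 0"
  unfolding quad_form_def by simp

lemma quad_form_insert:
  assumes "finite J" "i \<notin> J"
  shows "quad_form (insert i J) X w = w i * X i i * w i + (\<Sum>b\<in>J. w i * X i b * w b)
      + (\<Sum>a\<in>J. w a * X a i * w i) + quad_form J X w"
  unfolding quad_form_def using assms by (simp add: sum.distrib)

lemma pos_def_imp_pos_semidef: "pos_def_on J X \<Longrightarrow> pos_semidef_on J X"
  unfolding pos_def_on_def pos_semidef_on_def by (metis less_eq_real_def quad_form_zero)

lemma pos_semidef_diag_nonneg:
  assumes "finite J" "k \<in> J" "pos_semidef_on J Y"
  shows "0 \<le> Y k k"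
proof -
  let ?e = "\<lambda>j. if j = k then 1 else 0"
  have "quad_form J Y ?e = (\<Sum>i\<in>J. ?e i * Y i k)"
    unfolding quad_form_def by (simp only: mult.assoc sum_distrib_left[symmetric] sum_mult_delta[OF assms(1,2)])
  also have "\<dots> = Y k k"
    using sum_mult_delta[OF assms(1,2), of "\<lambda>i. Y i k"] by (simp add: mult.commute)
  finally have "quad_form J Y ?e = Y k k" .
  moreover have "0 \<le> quad_form J Y ?e"
    using assms(3) unfolding pos_semidef_on_def by blast
  ultimately show ?thesis by simp
qed

lemma pos_def_on_insertD:
  assumes "finite J" "i \<notin> J" "pos_def_on (insert i J) X"
  shows "pos_def_on J X"
  unfolding pos_def_on_def
proof (intro allI impI)
  fix w :: "_ \<Rightarrow> real"
  assume "\<exists>k\<in>J. w k \<noteq> 0"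
  then have "\<exists>k\<in>insert i J. (w(i := 0)) k \<noteq> 0"
    using assms(2) by auto
  then have "0 < quad_form (insert i J) X (w(i := 0))"
    using assms(3) unfolding pos_def_on_def by blast
  moreover have "quad_form (insert i J) X (w(i := 0)) = quad_form J X (w(i := 0))"
    using quad_form_insert[OF assms(1,2), of X "w(i := 0)"] by simp
  moreover have "\<dots> = quad_form J X w"
    using assms(2) by (intro quad_form_cong) auto
  ultimately show "0 < quad_form J X w" by simp
qed

lemma pos_semidef_on_inverse:
  assumes "finite J" "inverse_on J X Y" "pos_semidef_on J X"
  shows "pos_semidef_on J Y"
  unfolding pos_semidef_on_def
proof
  fix w :: "_ \<Rightarrow> real"
  define z where "z k = (\<Sum>l\<in>J. Y k l * w l)" for k
  have Xz: "(\<Sum>b\<in>J. X a b * z b) = w a" if a: "a \<in> J" for a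
  proof -
    have "(\<Sum>b\<in>J. X a b * z b) = (\<Sum>b\<in>J. \<Sum>l\<in>J. X a b * Y b l * w l)"
      unfolding z_def by (simp add: sum_distrib_left mult.assoc)
    also have "\<dots> = (\<Sum>l\<in>J. (\<Sum>b\<in>J. X a b * Y b l) * w l)"
      by (subst sum.swap) (simp add: sum_distrib_right)
    also have "\<dots> = (\<Sum>l\<in>J. (if a = l then 1 else 0) * w l)"
      using inverse_onD[OF assms(2) a] by (intro sum.cong) auto
    finally show ?thesis using assms(1) a by simp
  qed
  have "quad_form J X z = (\<Sum>a\<in>J. z a * (\<Sum>b\<in>J. X a b * z b))"
    unfolding quad_form_def by (simp add: sum_distrib_left mult.assoc)
  also have "\<dots> = (\<Sum>a\<in>J. z a * w a)"
    using Xz by (intro sum.cong) auto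
  also have "\<dots> = quad_form J Y w"
    unfolding quad_form_def z_def by (simp add: sum_distrib_right sum_distrib_left algebra_simps)
  finally show "0 \<le> quad_form J Y w"
    using assms(3) unfolding pos_semidef_on_def by metis
qed

section \<open>Schur complements and bordered inverses\<close>

text \<open>If \<open>Y\<close> inverts \<open>X\<close> on \<open>J\<close>, then \<open>schur_vec J X Y i\<close> is the vector
  \<open>u = X\<^sub>J\<^sup>-\<^sup>1 X\<^sub>J\<^sub>i\<close> and \<open>schur_compl J X Y i\<close> is the Schur complement
  \<open>X\<^sub>i\<^sub>i - X\<^sub>i\<^sub>J X\<^sub>J\<^sup>-\<^sup>1 X\<^sub>J\<^sub>i\<close> of \<open>X\<^sub>J\<close> in \<open>X\<^bsub>J \<union> {i}\<^esub>\<close>.\<close>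

definition schur_vec :: "'a set \<Rightarrow> ('a \<Rightarrow> 'a \<Rightarrow> real) \<Rightarrow> ('a \<Rightarrow> 'a \<Rightarrow> real) \<Rightarrow> 'a \<Rightarrow> 'a \<Rightarrow> real" where
  "schur_vec J X Y i k = (\<Sum>l\<in>J. Y k l * X l i)"

definition schur_compl :: "'a set \<Rightarrow> ('a \<Rightarrow> 'a \<Rightarrow> real) \<Rightarrow> ('a \<Rightarrow> 'a \<Rightarrow> real) \<Rightarrow> 'a \<Rightarrow> real" where
  "schur_compl J X Y i = X i i - (\<Sum>k\<in>J. X i k * schur_vec J X Y i k)"

lemma mult_schur_vec:
  assumes "finite J" "inverse_on J X Y" "k \<in> J"
  shows "(\<Sum>l\<in>J. X k l * schur_vec J X Y i l) = X k i"
proof -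
  have "(\<Sum>l\<in>J. X k l * schur_vec J X Y i l) = (\<Sum>l\<in>J. \<Sum>r\<in>J. X k l * Y l r * X r i)"
    unfolding schur_vec_def by (simp add: sum_distrib_left mult.assoc)
  also have "\<dots> = (\<Sum>r\<in>J. (\<Sum>l\<in>J. X k l * Y l r) * X r i)"
    by (subst sum.swap) (simp add: sum_distrib_right)
  also have "\<dots> = (\<Sum>r\<in>J. (if k = r then 1 else 0) * X r i)"
    using inverse_onD[OF assms(2,3)] by (intro sum.cong) auto
  finally show ?thesis
    using assms(1,3) by simp
qed

lemma quad_form_insert_schur:
  assumes "finite J" "i \<notin> J" "sym_matrix X" "inverse_on J X Y"
  shows "quad_form (insert i J) X w =
    quad_form J X (\<lambda>k. w k + w i * schur_vec J X Y i k) + schur_compl J X Y i * (w i)^2"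
proof -
  define u where "u = schur_vec J X Y i"
  have sX: "X a b = X b a" for a b
    using assms(3) unfolding sym_matrix_def by blast
  have expand: "quad_form J X (\<lambda>k. w k + w i * u k) = quad_form J X w
      + w i * (\<Sum>a\<in>J. \<Sum>b\<in>J. u a * X a b * w b) + w i * (\<Sum>a\<in>J. \<Sum>b\<in>J. w a * X a b * u b)
      + (w i)^2 * (\<Sum>a\<in>J. \<Sum>b\<in>J. u a * X a b * u b)"
    unfolding quad_form_def
    by (simp add: algebra_simps sum.distrib sum_distrib_left power2_eq_square)
  have cross: "(\<Sum>a\<in>J. \<Sum>b\<in>J. v a * X a b * u b) = (\<Sum>a\<in>J. v a * X a i)" for v :: "_ \<Rightarrow> real"
  proof -
    have "(\<Sum>a\<in>J. \<Sum>b\<in>J. v a * X a b * u b) = (\<Sum>a\<in>J. v a * (\<Sum>b\<in>J. X a b * u b))"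
      by (simp add: sum_distrib_left mult.assoc)
    also have "\<dots> = (\<Sum>a\<in>J. v a * X a i)"
      using mult_schur_vec[OF assms(1,4)] unfolding u_def by (intro sum.cong) auto
    finally show ?thesis .
  qed
  have cross_sym: "(\<Sum>a\<in>J. \<Sum>b\<in>J. u a * X a b * w b) = (\<Sum>a\<in>J. \<Sum>b\<in>J. w a * X a b * u b)"
    by (subst sum.swap) (simp add: sX mult.commute mult.left_commute)
  have compl: "schur_compl J X Y i = X i i - (\<Sum>a\<in>J. u a * X a i)"
    unfolding schur_compl_def u_def by (simp add: sX mult.commute)
  show ?thesis
    unfolding quad_form_insert[OF assms(1,2)] expand[unfolded u_def] cross_sym[unfolded u_def]
      cross[unfolded u_def] compl[unfolded u_def]
    by (simp add: algebra_simps power2_eq_square sum_distrib_left sum_distrib_right sX)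
qed

definition bordered_inverse ::
    "'a set \<Rightarrow> ('a \<Rightarrow> 'a \<Rightarrow> real) \<Rightarrow> ('a \<Rightarrow> 'a \<Rightarrow> real) \<Rightarrow> 'a \<Rightarrow> 'a \<Rightarrow> 'a \<Rightarrow> real" where
  "bordered_inverse J X Y i a b = (let u = schur_vec J X Y i; s = schur_compl J X Y i in
     if a \<in> J \<and> b \<in> J then Y a b + u a * u b / s
     else if a \<in> J \<and> b = i then - u a / s
     else if a = i \<and> b \<in> J then - u b / s
     else if a = i \<and> b = i then 1 / s else 0)"

lemma bordered_inverse_entries:
  fixes X Y :: "'a \<Rightarrow> 'a \<Rightarrow> real"
  assumes "i \<notin> J"
  defines "u \<equiv> schur_vec J X Y i" and "s \<equiv> schur_compl J X Y i"
  shows "a \<in> J \<Longrightarrow> b \<in> J \<Longrightarrow> bordered_inverse J X Y i a b = Y a b + u a * u b / s"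
    and "a \<in> J \<Longrightarrow> bordered_inverse J X Y i a i = - u a / s"
    and "b \<in> J \<Longrightarrow> bordered_inverse J X Y i i b = - u b / s"
    and "bordered_inverse J X Y i i i = 1 / s"
  using assms(1) unfolding bordered_inverse_def u_def s_def Let_def by auto

lemma sym_matrix_bordered_inverse:
  assumes "sym_matrix Y" "i \<notin> J"
  shows "sym_matrix (bordered_inverse J X Y i)"
  unfolding sym_matrix_def
proof (intro allI)
  fix a b
  have "Y a b = Y b a"
    using assms(1) unfolding sym_matrix_def by blast
  then show "bordered_inverse J X Y i a b = bordered_inverse J X Y i b a"
    unfolding bordered_inverse_def Let_def using assms(2)
    by (cases "a \<in> J"; cases "b \<in> J"; cases "a = i"; cases "b = i") (simp_all add: mult.commute)
qed

lemma bordered_inverse_new_column: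
  assumes "finite J" "i \<notin> J" "inverse_on J X Y" "schur_compl J X Y i \<noteq> 0"
    and "a \<in> insert i J"
  shows "(\<Sum>k\<in>insert i J. X a k * bordered_inverse J X Y i k i) = (if a = i then 1 else 0)"
proof -
  define u where "u = schur_vec J X Y i"
  define s where "s = schur_compl J X Y i"
  have "(\<Sum>k\<in>J. X a k * bordered_inverse J X Y i k i) = (\<Sum>k\<in>J. - (X a k * u k) / s)"
    using bordered_inverse_entries(2)[OF assms(2)] unfolding u_def s_def by (intro sum.cong) auto
  then have "(\<Sum>k\<in>insert i J. X a k * bordered_inverse J X Y i k i) = X a i / s - (\<Sum>k\<in>J. X a k * u k) / s"
    using assms(1,2) bordered_inverse_entries(4)[OF assms(2)]
    by (simp add: s_def sum_divide_distrib sum_negf)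
  also have "\<dots> = (if a = i then 1 else 0)"
  proof (cases "a = i")
    case True
    have "(\<Sum>k\<in>J. X i k * u k) = X i i - s"
      unfolding s_def schur_compl_def u_def by simp
    then show ?thesis
      using True assms(4) unfolding s_def by (simp add: field_simps)
  next
    case False
    then show ?thesis
      using assms(5) mult_schur_vec[OF assms(1,3)] unfolding u_def by auto
  qed
  finally show ?thesis .
qed

lemma bordered_inverse_old_column:
  assumes "finite J" "i \<notin> J" "sym_matrix X" "inverse_on J X Y" "sym_matrix Y"
    and "schur_compl J X Y i \<noteq> 0" and "a \<in> insert i J" "b \<in> J"
  shows "(\<Sum>k\<in>insert i J. X a k * bordered_inverse J X Y i k b) = (if a = b then 1 else 0)"
proof -
  define u where "u = schur_vec J X Y i"
  define s where "s = schur_compl J X Y i"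
  have "(\<Sum>k\<in>J. X a k * bordered_inverse J X Y i k b) = (\<Sum>k\<in>J. X a k * Y k b + X a k * u k * u b / s)"
    using bordered_inverse_entries(1)[OF assms(2) _ assms(8)] unfolding u_def s_def
    by (intro sum.cong) (auto simp: algebra_simps)
  then have "(\<Sum>k\<in>insert i J. X a k * bordered_inverse J X Y i k b)
      = - X a i * u b / s + (\<Sum>k\<in>J. X a k * Y k b) + (\<Sum>k\<in>J. X a k * u k) * u b / s"
    using assms(1,2) bordered_inverse_entries(3)[OF assms(2) assms(8)]
    by (simp add: s_def u_def sum.distrib sum_divide_distrib sum_distrib_right)
  also have "\<dots> = (if a = b then 1 else 0)"
  proof (cases "a = i")
    case True
    have "(\<Sum>k\<in>J. X i k * u k) = X i i - s"
      unfolding s_def schur_compl_def u_def by simp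
    moreover have "(\<Sum>k\<in>J. X i k * Y k b) = u b"
      using assms(3,5) unfolding u_def schur_vec_def sym_matrix_def
      by (intro sum.cong) (auto simp: mult.commute)
    ultimately have "- X a i * u b / s + (\<Sum>k\<in>J. X a k * Y k b) + (\<Sum>k\<in>J. X a k * u k) * u b / s
        = - X i i * u b / s + u b + (X i i - s) * u b / s"
      using True by simp
    then show ?thesis
      using True assms(2,6,8) unfolding s_def by (auto simp: field_simps)
  next
    case False
    then have "a \<in> J" using assms(7) by simp
    then show ?thesis
      using mult_schur_vec[OF assms(1,4)] inverse_onD[OF assms(4) _ assms(8)] unfolding u_def
      by auto
  qed
  finally show ?thesis .
qed

lemma inverse_on_bordered_inverse:
  assumes "finite J" "i \<notin> J" "sym_matrix X" "inverse_on J X Y" "sym_matrix Y"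
    and "schur_compl J X Y i \<noteq> 0"
  shows "inverse_on (insert i J) X (bordered_inverse J X Y i)"
  unfolding inverse_on_def
proof (intro ballI)
  fix a b
  assume "a \<in> insert i J" "b \<in> insert i J"
  then show "(\<Sum>k\<in>insert i J. X a k * bordered_inverse J X Y i k b) = (if a = b then 1 else 0)"
    using bordered_inverse_new_column[OF assms(1,2,4,6)] bordered_inverse_old_column[OF assms]
    by (cases "b = i") auto
qed

lemma trace_bordered_inverse:
  assumes "finite J" "i \<notin> J"
  shows "(\<Sum>k\<in>insert i J. bordered_inverse J X Y i k k) =
    (\<Sum>k\<in>J. Y k k) + (1 + (\<Sum>k\<in>J. (schur_vec J X Y i k)^2)) / schur_compl J X Y i"
proof -
  have "(\<Sum>k\<in>J. bordered_inverse J X Y i k k) =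
      (\<Sum>k\<in>J. Y k k + (schur_vec J X Y i k)^2 / schur_compl J X Y i)"
    using bordered_inverse_entries(1)[OF assms(2)] by (intro sum.cong) (auto simp: power2_eq_square)
  then show ?thesis
    using assms bordered_inverse_entries(4)[OF assms(2)]
    by (simp add: sum.distrib sum_divide_distrib add_divide_distrib)
qed

lemma pos_def_on_insert:
  assumes "finite J" "i \<notin> J" "sym_matrix X" "inverse_on J X Y" "pos_def_on J X"
    and "0 < schur_compl J X Y i"
  shows "pos_def_on (insert i J) X"
  unfolding pos_def_on_def
proof (intro allI impI)
  fix w :: "_ \<Rightarrow> real"
  assume nonzero: "\<exists>k\<in>insert i J. w k \<noteq> 0"
  let ?v = "\<lambda>k. w k + w i * schur_vec J X Y i k"
  have "0 \<le> quad_form J X ?v"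
    using pos_def_imp_pos_semidef[OF assms(5)] unfolding pos_semidef_on_def by blast
  moreover have "0 < quad_form J X ?v \<or> 0 < schur_compl J X Y i * (w i)^2"
  proof (cases "w i = 0")
    case True
    then show ?thesis
      using nonzero assms(5) unfolding pos_def_on_def by auto
  next
    case False
    then show ?thesis using assms(6) by simp
  qed
  moreover have "0 \<le> schur_compl J X Y i * (w i)^2"
    using assms(6) by simp
  ultimately show "0 < quad_form (insert i J) X w"
    unfolding quad_form_insert_schur[OF assms(1-4)] by linarith
qed

lemma inverse_on_exists:
  assumes "finite J" "sym_matrix X" "pos_def_on J X"
  shows "\<exists>Y. inverse_on J X Y \<and> sym_matrix Y"
  using assms(1,3)
proof (induction J rule: finite_induct)
  case empty
  show ?case
    by (rule exI[of _ "\<lambda>_ _. 0"]) (simp add: inverse_on_def sym_matrix_def)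
next
  case (insert i J)
  obtain Y where Y: "inverse_on J X Y" "sym_matrix Y"
    using insert.IH pos_def_on_insertD[OF insert.hyps insert.prems] by blast
  text \<open>The Schur complement is the value of the quadratic form at \<open>(-u, 1)\<close>.\<close>
  define w where "w k = (if k = i then 1 else - schur_vec J X Y i k)" for k
  have "quad_form J X (\<lambda>k. w k + w i * schur_vec J X Y i k) = 0"
    using insert.hyps(2) by (intro quad_form_zero) (auto simp: w_def)
  moreover have "0 < quad_form (insert i J) X w"
    using insert.prems unfolding pos_def_on_def by (auto simp: w_def)
  ultimately have "0 < schur_compl J X Y i"
    unfolding quad_form_insert_schur[OF insert.hyps assms(2) Y(1)] by (simp add: w_def)
  then show ?case
    using inverse_on_bordered_inverse[OF insert.hyps assms(2) Y]
      sym_matrix_bordered_inverse[OF Y(2) insert.hyps(2)] by auto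
qed

lemma resolvent_identity:
  assumes "finite J" "sym_matrix Xb" "sym_matrix Yb" "inverse_on J Xb Yb" "inverse_on J Xx Yx"
    and shift: "\<And>a b. a \<in> J \<Longrightarrow> b \<in> J \<Longrightarrow> Xx a b = Xb a b + (if a = b then \<delta> else 0)"
    and "a \<in> J" "b \<in> J"
  shows "Yb a b = Yx a b + \<delta> * (\<Sum>q\<in>J. Yb a q * Yx q b)"
proof -
  have YbXx: "(\<Sum>r\<in>J. Yb a r * Xx r q) = (if a = q then 1 else 0) + \<delta> * Yb a q" if q: "q \<in> J" for q
  proof -
    have "(\<Sum>r\<in>J. Yb a r * Xx r q) = (\<Sum>r\<in>J. Yb a r * Xb r q + \<delta> * (Yb a r * (if r = q then 1 else 0)))"
      using shift[OF _ q] by (intro sum.cong) (auto simp: algebra_simps)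
    also have "\<dots> = (\<Sum>r\<in>J. Yb a r * Xb r q) + \<delta> * Yb a q"
      using assms(1) q by (simp add: sum.distrib sum_distrib_left[symmetric])
    finally show ?thesis
      using inverse_on_left[OF assms(4,2,3,7) q] by simp
  qed
  have "Yb a b = (\<Sum>r\<in>J. Yb a r * (\<Sum>q\<in>J. Xx r q * Yx q b))"
    using inverse_onD[OF assms(5) _ assms(8)] assms(1,8) by (simp cong: sum.cong)
  also have "\<dots> = (\<Sum>q\<in>J. (\<Sum>r\<in>J. Yb a r * Xx r q) * Yx q b)"
    by (simp add: sum_distrib_left sum_distrib_right mult.assoc) (rule sum.swap)
  also have "\<dots> = (\<Sum>q\<in>J. (if a = q then 1 else 0) * Yx q b + \<delta> * (Yb a q * Yx q b))"
    using YbXx by (intro sum.cong) (auto simp: algebra_simps)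
  also have "\<dots> = Yx a b + \<delta> * (\<Sum>q\<in>J. Yb a q * Yx q b)"
    using assms(1,7) by (simp add: sum.distrib sum_distrib_left)
  finally show ?thesis .
qed

text \<open>By the resolvent identity, \<open>tr Yb - tr Yx = \<delta> tr (Yb Yx)\<close> and
  \<open>tr (Yb Yx) - tr (Yx\<^sup>2) = \<delta> tr (Yx Yb Yx) \<ge> 0\<close>.\<close>

lemma trace_resolvent_ge:
  assumes "finite J" "sym_matrix Xb" "sym_matrix Yb" "sym_matrix Yx"
    and "inverse_on J Xb Yb" "inverse_on J Xx Yx"
    and shift: "\<And>a b. a \<in> J \<Longrightarrow> b \<in> J \<Longrightarrow> Xx a b = Xb a b + (if a = b then \<delta> else 0)"
    and "pos_semidef_on J Yb" "0 \<le> \<delta>"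
  shows "\<delta> * (\<Sum>a\<in>J. \<Sum>b\<in>J. (Yx a b)^2) \<le> (\<Sum>k\<in>J. Yb k k) - (\<Sum>k\<in>J. Yx k k)"
proof -
  have yx: "Yx a b = Yx b a" for a b
    using assms(4) unfolding sym_matrix_def by blast
  note E = resolvent_identity[OF assms(1,2,3,5,6) shift]
  define S where "S = (\<Sum>a\<in>J. \<Sum>q\<in>J. Yb a q * Yx q a)"
  have trace_diff: "(\<Sum>k\<in>J. Yb k k) - (\<Sum>k\<in>J. Yx k k) = \<delta> * S"
  proof -
    have "(\<Sum>k\<in>J. Yb k k) = (\<Sum>k\<in>J. Yx k k + \<delta> * (\<Sum>q\<in>J. Yb k q * Yx q k))"
      using E by (intro sum.cong) auto
    then show ?thesis
      unfolding S_def by (simp add: sum.distrib sum_distrib_left)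
  qed
  have "S - (\<Sum>a\<in>J. \<Sum>q\<in>J. Yx a q * Yx q a) = (\<Sum>a\<in>J. \<Sum>q\<in>J. (Yb a q - Yx a q) * Yx q a)"
    unfolding S_def by (simp add: sum_subtractf algebra_simps)
  also have "\<dots> = (\<Sum>a\<in>J. \<Sum>q\<in>J. \<delta> * (\<Sum>r\<in>J. Yb a r * Yx r q) * Yx q a)"
    using E by (intro sum.cong refl) auto
  also have "\<dots> = \<delta> * (\<Sum>q\<in>J. quad_form J Yb (\<lambda>r. Yx r q))"
    unfolding quad_form_def
    by (simp add: sum_distrib_left sum_distrib_right algebra_simps yx[of q a for q a])
      (subst sum.swap, simp add: algebra_simps yx)
  also have "\<dots> \<ge> 0"
    using assms(8,9) unfolding pos_semidef_on_def by (simp add: sum_nonneg)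
  finally have "(\<Sum>a\<in>J. \<Sum>b\<in>J. (Yx a b)^2) \<le> S"
    by (simp add: power2_eq_square yx)
  then show ?thesis
    using trace_diff assms(9) by (simp add: mult_left_mono)
qed

section \<open>The barrier method for an orthogonal projection\<close>

definition diag_shift :: "('a \<Rightarrow> 'a \<Rightarrow> real) \<Rightarrow> real \<Rightarrow> 'a \<Rightarrow> 'a \<Rightarrow> real" where
  "diag_shift P x a b = P a b - (if a = b then x else 0)"

lemma sym_matrix_diag_shift: "sym_matrix P \<Longrightarrow> sym_matrix (diag_shift P x)"
  unfolding sym_matrix_def diag_shift_def by auto

lemma schur_vec_diag_shift: "i \<notin> J \<Longrightarrow> schur_vec J (diag_shift P x) Y i = schur_vec J P Y i"
  unfolding schur_vec_def diag_shift_def by (intro ext sum.cong) auto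

lemma schur_compl_diag_shift:
  "i \<notin> J \<Longrightarrow> schur_compl J (diag_shift P x) Y i = schur_compl J P Y i - x"
  unfolding schur_compl_def schur_vec_diag_shift by (auto simp: diag_shift_def intro!: sum.cong)

lemma quad_form_diag_shift:
  assumes "finite J"
  shows "quad_form J (diag_shift P x) w = quad_form J (diag_shift P b) w + (b - x) * (\<Sum>k\<in>J. (w k)^2)"
proof -
  have "quad_form J (diag_shift P x) w =
      (\<Sum>i\<in>J. \<Sum>j\<in>J. w i * diag_shift P b i j * w j + (b - x) * (w j * w i * (if j = i then 1 else 0)))"
    unfolding quad_form_def diag_shift_def by (intro sum.cong refl) (auto simp: algebra_simps)
  also have "\<dots> = quad_form J (diag_shift P b) w + (b - x) * (\<Sum>i\<in>J. \<Sum>j\<in>J. w j * w i * (if j = i then 1 else 0))"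
    unfolding quad_form_def by (simp add: sum.distrib sum_distrib_left)
  also have "(\<Sum>i\<in>J. \<Sum>j\<in>J. w j * w i * (if j = i then 1 else 0)) = (\<Sum>k\<in>J. (w k)^2)"
    using assms by (intro sum.cong refl) (simp add: power2_eq_square)
  finally show ?thesis .
qed

lemma pos_def_on_diag_shift_mono:
  assumes "finite J" "pos_def_on J (diag_shift P b)" "x \<le> b"
  shows "pos_def_on J (diag_shift P x)"
  unfolding pos_def_on_def
proof (intro allI impI)
  fix w :: "_ \<Rightarrow> real"
  assume "\<exists>i\<in>J. w i \<noteq> 0"
  then have "0 < quad_form J (diag_shift P b) w"
    using assms(2) unfolding pos_def_on_def by blast
  moreover have "0 \<le> (b - x) * (\<Sum>k\<in>J. (w k)^2)"
    using assms(3) by (intro mult_nonneg_nonneg sum_nonneg) auto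
  ultimately show "0 < quad_form J (diag_shift P x) w"
    unfolding quad_form_diag_shift[OF assms(1), of P x w b] by simp
qed

lemma inverse_on_diag_shift_mult:
  assumes "finite J" "sym_matrix P" "sym_matrix Y" "inverse_on J (diag_shift P x) Y" "k \<in> J" "j \<in> J"
  shows "(\<Sum>l\<in>J. Y k l * P l j) = (if k = j then 1 else 0) + x * Y k j"
proof -
  have "(\<Sum>l\<in>J. Y k l * P l j) =
      (\<Sum>l\<in>J. Y k l * diag_shift P x l j + x * (Y k l * (if l = j then 1 else 0)))"
    by (intro sum.cong) (auto simp: diag_shift_def algebra_simps)
  also have "\<dots> = (\<Sum>l\<in>J. Y k l * diag_shift P x l j) + x * Y k j"
    using assms(1,6) by (simp add: sum.distrib sum_distrib_left[symmetric])
  finally show ?thesis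
    using inverse_on_left[OF assms(4) sym_matrix_diag_shift[OF assms(2)] assms(3,5,6)] by simp
qed

lemma sum_schur_compl:
  fixes P :: "'a::finite \<Rightarrow> 'a \<Rightarrow> real"
  assumes "finite J" "sym_matrix P" "sym_matrix Y" "inverse_on J (diag_shift P x) Y"
    and idem: "\<And>a b. (\<Sum>l\<in>UNIV. P a l * P l b) = P a b"
  shows "(\<Sum>i\<in>UNIV. schur_compl J P Y i) = (\<Sum>i\<in>UNIV. P i i) - real (card J) - x * (\<Sum>k\<in>J. Y k k)"
proof -
  have "(\<Sum>i\<in>UNIV. \<Sum>k\<in>J. P i k * schur_vec J P Y i k) =
      (\<Sum>i\<in>UNIV. \<Sum>k\<in>J. \<Sum>l\<in>J. Y k l * (P l i * P i k))"
    unfolding schur_vec_def by (intro sum.cong refl) (simp add: sum_distrib_left mult_ac)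
  also have "\<dots> = (\<Sum>k\<in>J. \<Sum>l\<in>J. \<Sum>i\<in>UNIV. Y k l * (P l i * P i k))"
    by (subst sum.swap) (simp add: sum.swap[of _ UNIV])
  also have "\<dots> = (\<Sum>k\<in>J. \<Sum>l\<in>J. Y k l * P l k)"
    by (simp only: sum_distrib_left[symmetric] idem)
  also have "\<dots> = (\<Sum>k\<in>J. 1 + x * Y k k)"
    using inverse_on_diag_shift_mult[OF assms(1-4)] by (intro sum.cong) auto
  finally show ?thesis
    unfolding schur_compl_def by (simp add: sum_subtractf sum.distrib sum_distrib_left)
qed

lemma sum_schur_vec_sq:
  fixes P :: "'a::finite \<Rightarrow> 'a \<Rightarrow> real"
  assumes "finite J" "sym_matrix P" "sym_matrix Y" "inverse_on J (diag_shift P x) Y"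
    and idem: "\<And>a b. (\<Sum>l\<in>UNIV. P a l * P l b) = P a b"
  shows "(\<Sum>i\<in>UNIV. \<Sum>k\<in>J. (schur_vec J P Y i k)^2) =
    (\<Sum>k\<in>J. Y k k) + x * (\<Sum>a\<in>J. \<Sum>b\<in>J. (Y a b)^2)"
proof -
  have sP: "P a b = P b a" for a b
    using assms(2) unfolding sym_matrix_def by blast
  have idem': "(\<Sum>i\<in>UNIV. P a i * P b i) = P a b" for a b
    using idem[of a b] by (simp add: sP[of b])
  have "(\<Sum>i\<in>UNIV. \<Sum>k\<in>J. (schur_vec J P Y i k)^2) =
      (\<Sum>i\<in>UNIV. \<Sum>k\<in>J. \<Sum>l\<in>J. \<Sum>l'\<in>J. Y k l * Y k l' * (P l i * P l' i))"
    unfolding schur_vec_def power2_eq_square sum_product by (intro sum.cong refl) (simp add: mult_ac)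
  also have "\<dots> = (\<Sum>k\<in>J. \<Sum>l\<in>J. \<Sum>l'\<in>J. \<Sum>i\<in>UNIV. Y k l * Y k l' * (P l i * P l' i))"
    by (subst sum.swap) (simp add: sum.swap[of _ UNIV])
  also have "\<dots> = (\<Sum>k\<in>J. \<Sum>l\<in>J. Y k l * (\<Sum>l'\<in>J. Y k l' * P l' l))"
    by (simp only: sum_distrib_left[symmetric] idem') (simp add: sum_distrib_left sP mult_ac)
  also have "\<dots> = (\<Sum>k\<in>J. \<Sum>l\<in>J. Y k l * (if l = k then 1 else 0) + x * (Y k l)^2)"
    using inverse_on_diag_shift_mult[OF assms(1-4)]
    by (intro sum.cong refl) (auto simp: algebra_simps power2_eq_square)
  finally show ?thesis
    using assms(1) by (simp add: sum.distrib sum_distrib_left)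
qed

lemma schur_compl_le_of_mem:
  assumes "finite J" "sym_matrix P" "sym_matrix Y" "inverse_on J (diag_shift P x) Y" "i \<in> J"
    and "pos_semidef_on J Y" "0 \<le> x"
  shows "schur_compl J P Y i \<le> x"
proof -
  have sP: "P a b = P b a" and sY: "Y a b = Y b a" for a b
    using assms(2,3) unfolding sym_matrix_def by blast+
  have u: "schur_vec J P Y i k = (if k = i then 1 else 0) + x * Y i k" if "k \<in> J" for k
    unfolding schur_vec_def using inverse_on_diag_shift_mult[OF assms(1-4) that assms(5)]
    by (simp add: sY[of i k])
  have "(\<Sum>k\<in>J. P i k * schur_vec J P Y i k) = (\<Sum>k\<in>J. P i k * (if k = i then 1 else 0) + x * (Y i k * P k i))"
    using u by (intro sum.cong) (auto simp: algebra_simps sP[of i])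
  also have "\<dots> = P i i + x * (1 + x * Y i i)"
    using inverse_on_diag_shift_mult[OF assms(1-4,5,5)] assms(1,5)
    by (simp add: sum.distrib sum_distrib_left[symmetric])
  finally have "schur_compl J P Y i = - x - x^2 * Y i i"
    unfolding schur_compl_def by (simp add: algebra_simps power2_eq_square)
  moreover have "0 \<le> x^2 * Y i i"
    using pos_semidef_diag_nonneg[OF assms(1,5,6)] by simp
  ultimately show ?thesis
    using assms(7) by linarith
qed

lemma diag_shift_extend:
  assumes "finite J" "i \<notin> J" "sym_matrix P" "pos_def_on J (diag_shift P x)"
    and "inverse_on J (diag_shift P x) Y" "sym_matrix Y" "x < schur_compl J P Y i"
  shows "pos_def_on (insert i J) (diag_shift P x)"
    and "\<exists>Y'. inverse_on (insert i J) (diag_shift P x) Y' \<and> sym_matrix Y' \<and>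
      (\<Sum>k\<in>insert i J. Y' k k) =
        (\<Sum>k\<in>J. Y k k) + (1 + (\<Sum>k\<in>J. (schur_vec J P Y i k)^2)) / (schur_compl J P Y i - x)"
proof -
  note compl = schur_compl_diag_shift[OF assms(2), of P x Y]
  note sX = sym_matrix_diag_shift[OF assms(3)]
  show "pos_def_on (insert i J) (diag_shift P x)"
    using pos_def_on_insert[OF assms(1,2) sX assms(5,4)] compl assms(7) by simp
  show "\<exists>Y'. inverse_on (insert i J) (diag_shift P x) Y' \<and> sym_matrix Y' \<and>
      (\<Sum>k\<in>insert i J. Y' k k) =
        (\<Sum>k\<in>J. Y k k) + (1 + (\<Sum>k\<in>J. (schur_vec J P Y i k)^2)) / (schur_compl J P Y i - x)"
    using inverse_on_bordered_inverse[OF assms(1,2) sX assms(5,6)]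
      sym_matrix_bordered_inverse[OF assms(6,2)] trace_bordered_inverse[OF assms(1,2)]
      compl assms(7)
    by (auto simp: schur_vec_diag_shift[OF assms(2)])
qed

text \<open>The numerical core of one barrier step: \<open>Tb\<close> and \<open>T\<close> are the traces of the inverses at
  the barriers \<open>b\<close> and \<open>x = b - \<delta>\<close>, \<open>T2\<close> is the squared Frobenius norm of the latter, and
  \<open>N\<close> is the number of indices still to be chosen.\<close>

lemma barrier_arith:
  fixes U K \<delta> b x N T T2 Tb m :: real
  assumes K: "K = - m - U" "0 < K" "\<delta> * K = 1" and x: "x = b - \<delta>" "0 < x" and "0 < b"
    and "b \<le> \<delta> * N" "0 \<le> N" "0 \<le> T2" and pot: "Tb - N / b \<le> U" and res: "\<delta> * T2 \<le> Tb - T"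
  shows "m + T + x * T2 \<le> (U + (N - 1) / x - T) * (N - m * x - x * T)"
    and "0 < N - m * x - x * T"
proof -
  have "\<delta> = 1 / K"
    using K(2,3) by (simp add: field_simps)
  then have d0: "0 < \<delta>"
    using K(2) by simp
  define h where "h = U - T + N / x"
  define L where "L = - m - T + N / x"
  define h0 where "h0 = \<delta> * T2 + \<delta> * N / (b * x)"
  have g: "0 \<le> \<delta> * N / (b * x)"
    using d0 assms by simp
  have h0n: "0 \<le> h0"
    unfolding h0_def using g d0 assms by simp
  have "N / x - N / b = \<delta> * N / (b * x)"
    using x \<open>0 < b\<close> by (simp add: field_simps) (simp add: x(1) algebra_simps)
  then have hh0: "h0 \<le> h"
    unfolding h_def h0_def using pot res by linarith
  have L_pos: "0 < L"
    using hh0 h0n K unfolding L_def h_def by linarith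
  have xL: "x * L = N - m * x - x * T"
    unfolding L_def using x by (simp add: field_simps)
  show "0 < N - m * x - x * T"
    using xL L_pos x(2) by (metis mult_pos_pos)
  have E: "(U + (N - 1) / x - T) * (N - m * x - x * T) - (m + T + x * T2) = x * (h * L - N / x^2 - T2)"
    unfolding h_def L_def using x by (simp add: field_simps power2_eq_square)
  have m1: "h0 * (K + h0) \<le> h * L"
    using hh0 h0n K(2) unfolding L_def h_def K(1) by (intro mult_mono) auto
  have m2: "h0 * K = T2 + N / (b * x)"
  proof -
    have "h0 * K = (\<delta> * K) * (T2 + N / (b * x))"
      unfolding h0_def by (simp add: algebra_simps)
    then show ?thesis
      using K(3) by simp
  qed
  have m3: "(\<delta> * N / (b * x))^2 \<le> h0^2"
    using g unfolding h0_def by (intro power_mono) (use d0 assms in auto)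
  have "(\<delta> * N / (b * x))^2 - (N / x^2 - N / (b * x)) = (\<delta> * N) * (\<delta> * N - b) / (b^2 * x^2)"
    using x \<open>0 < b\<close> by (simp add: field_simps power2_eq_square, simp add: x(1) algebra_simps)
  also have "\<dots> \<ge> 0"
    using assms d0 by (intro divide_nonneg_pos mult_nonneg_nonneg) auto
  finally have m4: "N / x^2 \<le> N / (b * x) + (\<delta> * N / (b * x))^2"
    by simp
  have "0 \<le> h * L - N / x^2 - T2"
    using m1 m2 m3 m4 by (simp add: algebra_simps power2_eq_square)
  then have "0 \<le> (U + (N - 1) / x - T) * (N - m * x - x * T) - (m + T + x * T2)"
    unfolding E using x(2) by simp
  then show "m + T + x * T2 \<le> (U + (N - 1) / x - T) * (N - m * x - x * T)"
    by simp
qed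

lemma exists_ratio_le:
  fixes s c :: "'a::finite \<Rightarrow> real"
  assumes "\<And>i. 0 < c i" "0 < sum s UNIV" "sum c UNIV \<le> R * sum s UNIV"
  shows "\<exists>i. 0 < s i \<and> c i \<le> R * s i"
proof -
  have "0 < sum c UNIV"
    using assms(1) by (simp add: sum_pos)
  then have "0 < R"
    using assms(2,3) by (smt (verit) mult_nonpos_nonneg)
  have "\<exists>i. 0 \<le> R * s i - c i"
  proof (rule ccontr)
    assume "\<not> (\<exists>i. 0 \<le> R * s i - c i)"
    then have "(\<Sum>i\<in>UNIV. R * s i - c i) < (\<Sum>i\<in>(UNIV::'a set). 0)"
      by (intro sum_strict_mono) (auto simp: not_le)
    then show False
      using assms(3) by (simp add: sum_subtractf sum_distrib_left)
  qed
  then obtain i where "c i \<le> R * s i"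
    by auto
  moreover have "0 < s i"
    using calculation assms(1)[of i] \<open>0 < R\<close> by (meson less_le_trans zero_less_mult_pos)
  ultimately show ?thesis
    by blast
qed

text \<open>Averaging over all \<open>i\<close>: the numerators \<open>1 + |u\<^sub>i|\<^sup>2\<close> and denominators \<open>s\<^sub>i - x\<close> of the
  trace increments of the bordered inverses sum to the two sides of the hypothesis.\<close>

lemma exists_barrier_candidate:
  fixes P :: "'a::finite \<Rightarrow> 'a \<Rightarrow> real"
  assumes sP: "sym_matrix P" and idem: "\<And>a b. (\<Sum>l\<in>UNIV. P a l * P l b) = P a b"
    and trace: "(\<Sum>i\<in>UNIV. P i i) = n"
    and pd: "pos_def_on J (diag_shift P x)" and Y: "inverse_on J (diag_shift P x) Y" "sym_matrix Y"
    and "0 \<le> x"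
    and "real CARD('a) + (\<Sum>k\<in>J. Y k k) + x * (\<Sum>a\<in>J. \<Sum>b\<in>J. (Y a b)^2)
      \<le> R * (n - real (card J) - real CARD('a) * x - x * (\<Sum>k\<in>J. Y k k))"
    and "0 < n - real (card J) - real CARD('a) * x - x * (\<Sum>k\<in>J. Y k k)"
  shows "\<exists>i. i \<notin> J \<and> x < schur_compl J P Y i \<and>
    1 + (\<Sum>k\<in>J. (schur_vec J P Y i k)^2) \<le> R * (schur_compl J P Y i - x)"
proof -
  have fin: "finite J" by simp
  define s where "s i = schur_compl J P Y i - x" for i
  define c where "c i = 1 + (\<Sum>k\<in>J. (schur_vec J P Y i k)^2)" for i
  have "sum s UNIV = n - real (card J) - real CARD('a) * x - x * (\<Sum>k\<in>J. Y k k)"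
    unfolding s_def sum_subtractf sum_schur_compl[OF fin sP Y(2,1) idem] trace by simp
  moreover have "sum c UNIV = real CARD('a) + (\<Sum>k\<in>J. Y k k) + x * (\<Sum>a\<in>J. \<Sum>b\<in>J. (Y a b)^2)"
    unfolding c_def sum.distrib sum_schur_vec_sq[OF fin sP Y(2,1) idem] by simp
  moreover have "0 < c i" for i
    unfolding c_def by (simp add: add_pos_nonneg sum_nonneg)
  ultimately obtain i where i: "0 < s i" "c i \<le> R * s i"
    using exists_ratio_le[of c s R] assms(8,9) by auto
  moreover have "i \<notin> J"
    using schur_compl_le_of_mem[OF fin sP Y(2,1) _ _ \<open>0 \<le> x\<close>] pd fin Y i(1)
      pos_semidef_on_inverse[OF fin Y(1) pos_def_imp_pos_semidef[OF pd]]
    unfolding s_def by force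
  ultimately show ?thesis
    unfolding s_def c_def by auto
qed

definition barrier_state :: "('a \<Rightarrow> 'a \<Rightarrow> real) \<Rightarrow> real \<Rightarrow> real \<Rightarrow> 'a set \<Rightarrow> real \<Rightarrow> bool" where
  "barrier_state P n U J b \<longleftrightarrow> pos_def_on J (diag_shift P b) \<and>
     (\<exists>Y. inverse_on J (diag_shift P b) Y \<and> sym_matrix Y \<and>
        (\<Sum>k\<in>J. Y k k) - (n - real (card J)) / b \<le> U)"

lemma barrier_step:
  fixes P :: "'a::finite \<Rightarrow> 'a \<Rightarrow> real"
  assumes sP: "sym_matrix P" and idem: "\<And>a b. (\<Sum>l\<in>UNIV. P a l * P l b) = P a b"
    and trace: "(\<Sum>i\<in>UNIV. P i i) = n" and state: "barrier_state P n U J b"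
    and K: "0 < - real CARD('a) - U" "\<delta> * (- real CARD('a) - U) = 1"
    and x: "0 < b - \<delta>" and budget: "b \<le> \<delta> * (n - real (card J))" "real (card J) \<le> n"
  shows "\<exists>i. i \<notin> J \<and> barrier_state P n U (insert i J) (b - \<delta>)"
proof -
  define m where "m = real CARD('a)"
  define N where "N = n - real (card J)"
  define x where "x = b - \<delta>"
  have "\<delta> = 1 / (- m - U)"
    using K unfolding m_def by (simp add: field_simps)
  then have "0 < \<delta>"
    using K unfolding m_def by simp
  then have "0 < b"
    using x by simp
  have fin: "finite J" by simp
  note sX = sym_matrix_diag_shift[OF sP]
  obtain Yb where Yb: "inverse_on J (diag_shift P b) Yb" "sym_matrix Yb"
      and pot: "(\<Sum>k\<in>J. Yb k k) - N / b \<le> U" and pdb: "pos_def_on J (diag_shift P b)"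
    using state unfolding barrier_state_def N_def by blast
  have pdx: "pos_def_on J (diag_shift P x)"
    using pos_def_on_diag_shift_mono[OF fin pdb] \<open>0 < \<delta>\<close> unfolding x_def by simp
  obtain Yx where Yx: "inverse_on J (diag_shift P x) Yx" "sym_matrix Yx"
    using inverse_on_exists[OF fin sX pdx] by blast
  define T where "T = (\<Sum>k\<in>J. Yx k k)"
  define T2 where "T2 = (\<Sum>a\<in>J. \<Sum>b\<in>J. (Yx a b)^2)"
  have "\<delta> * T2 \<le> (\<Sum>k\<in>J. Yb k k) - T"
    unfolding T_def T2_def using \<open>0 < \<delta>\<close> pos_semidef_on_inverse[OF fin Yb(1) pos_def_imp_pos_semidef[OF pdb]]
    by (intro trace_resolvent_ge[OF fin sX Yb(2) Yx(2) Yb(1) Yx(1)]) (auto simp: diag_shift_def x_def)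
  moreover have "0 \<le> T2" "0 \<le> N" "b \<le> \<delta> * N" "0 < - m - U" "\<delta> * (- m - U) = 1" "0 < x"
    using budget K x unfolding T2_def N_def m_def x_def by (auto simp: sum_nonneg)
  ultimately have "m + T + x * T2 \<le> (U + (N - 1) / x - T) * (N - m * x - x * T)"
      "0 < N - m * x - x * T"
    using barrier_arith[OF refl _ _ x_def _ \<open>0 < b\<close> _ _ _ pot] by auto
  then obtain i where i: "i \<notin> J" "x < schur_compl J P Yx i"
      "1 + (\<Sum>k\<in>J. (schur_vec J P Yx i k)^2) \<le> (U + (N - 1) / x - T) * (schur_compl J P Yx i - x)"
    using exists_barrier_candidate[OF sP idem trace pdx Yx] \<open>0 < x\<close>
    unfolding T_def T2_def N_def m_def by fastforce
  obtain Y' where "pos_def_on (insert i J) (diag_shift P x)" "inverse_on (insert i J) (diag_shift P x) Y'"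
      "sym_matrix Y'" "(\<Sum>k\<in>insert i J. Y' k k) =
        T + (1 + (\<Sum>k\<in>J. (schur_vec J P Yx i k)^2)) / (schur_compl J P Yx i - x)"
    using diag_shift_extend[OF fin i(1) sP pdx Yx i(2)] unfolding T_def by auto
  moreover have "(1 + (\<Sum>k\<in>J. (schur_vec J P Yx i k)^2)) / (schur_compl J P Yx i - x) \<le> U + (N - 1) / x - T"
    using i(2,3) by (simp add: divide_le_eq mult.commute)
  moreover have "n - real (card (insert i J)) = N - 1"
    using i(1) unfolding N_def by simp
  ultimately have "pos_def_on (insert i J) (diag_shift P x)" "inverse_on (insert i J) (diag_shift P x) Y'"
      "sym_matrix Y'" "(\<Sum>k\<in>insert i J. Y' k k) - (n - real (card (insert i J))) / x \<le> U"
    by simp_all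
  then show ?thesis
    using i(1) unfolding barrier_state_def x_def by blast
qed

lemma barrier_final_step:
  fixes P :: "'a::finite \<Rightarrow> 'a \<Rightarrow> real"
  assumes sP: "sym_matrix P" and idem: "\<And>a b. (\<Sum>l\<in>UNIV. P a l * P l b) = P a b"
    and trace: "(\<Sum>i\<in>UNIV. P i i) = n" and state: "barrier_state P n U J b"
    and "0 < - real CARD('a) - U" "0 < b"
  shows "\<exists>i. i \<notin> J \<and> pos_def_on (insert i J) (diag_shift P b)"
proof -
  have fin: "finite J" by simp
  obtain Y where Y: "inverse_on J (diag_shift P b) Y" "sym_matrix Y"
      and pot: "(\<Sum>k\<in>J. Y k k) - (n - real (card J)) / b \<le> U" and pd: "pos_def_on J (diag_shift P b)"
    using state unfolding barrier_state_def by blast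
  have psd: "pos_semidef_on J Y"
    using pos_semidef_on_inverse[OF fin Y(1) pos_def_imp_pos_semidef[OF pd]] .
  have "(\<Sum>i\<in>UNIV. schur_compl J P Y i - b) =
      b * ((n - real (card J)) / b - (\<Sum>k\<in>J. Y k k) - real CARD('a))"
    unfolding sum_subtractf sum_schur_compl[OF fin sP Y(2,1) idem] trace
    using \<open>0 < b\<close> by (simp add: field_simps)
  also have "\<dots> > 0"
    using assms(5,6) pot by (intro mult_pos_pos) auto
  finally obtain i where i: "b < schur_compl J P Y i"
    by (metis (no_types, lifting) diff_gt_0_iff_gt not_le sum_nonpos)
  then have "i \<notin> J"
    using schur_compl_le_of_mem[OF fin sP Y(2,1) _ psd] \<open>0 < b\<close> by force
  then show ?thesis
    using diag_shift_extend(1)[OF fin _ sP pd Y i] by blast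
qed

lemma barrier_iterate:
  fixes P :: "'a::finite \<Rightarrow> 'a \<Rightarrow> real"
  assumes sP: "sym_matrix P" and idem: "\<And>a b. (\<Sum>l\<in>UNIV. P a l * P l b) = P a b"
    and trace: "(\<Sum>i\<in>UNIV. P i i) = n" and U: "- n / b0 \<le> U"
    and K: "0 < - real CARD('a) - U" "\<delta> * (- real CARD('a) - U) = 1"
    and "b0 \<le> \<delta> * n" and "0 < b0 - real j * \<delta>" "real j \<le> n"
  shows "t \<le> j \<Longrightarrow> \<exists>J. card J = t \<and> barrier_state P n U J (b0 - real t * \<delta>)"
proof (induction t)
  case 0
  show ?case
    using U by (intro exI[of _ "{}"])
      (auto simp: barrier_state_def pos_def_on_def inverse_on_def sym_matrix_def intro!: exI[of _ "\<lambda>_ _. 0"])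
next
  case (Suc t)
  have "\<delta> = 1 / (- real CARD('a) - U)"
    using K by (simp add: field_simps)
  then have "0 < \<delta>"
    using K(1) by simp
  obtain J where J: "card J = t" "barrier_state P n U J (b0 - real t * \<delta>)"
    using Suc by auto
  have "real (Suc t) * \<delta> \<le> real j * \<delta>"
    using Suc.prems \<open>0 < \<delta>\<close> by (intro mult_right_mono) auto
  then have "0 < b0 - real t * \<delta> - \<delta>"
    using assms(8) by (simp add: algebra_simps)
  moreover have "b0 - real t * \<delta> \<le> \<delta> * (n - real (card J))" "real (card J) \<le> n"
    using assms(7,9) J(1) Suc.prems by (simp_all add: algebra_simps)
  ultimately obtain i where "i \<notin> J" "barrier_state P n U (insert i J) (b0 - real t * \<delta> - \<delta>)"
    using barrier_step[OF sP idem trace J(2) K] by blast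
  moreover have "b0 - real t * \<delta> - \<delta> = b0 - real (Suc t) * \<delta>"
    by (simp add: algebra_simps)
  ultimately show ?case
    using J(1) by (metis card_insert_disjoint finite)
qed

lemma quad_form_ge_of_pos_def_diag_shift:
  assumes "finite J" "pos_def_on J (diag_shift P b)" "c \<le> b"
  shows "c * (\<Sum>l\<in>J. (w l)^2) \<le> quad_form J P w"
proof -
  have "P = diag_shift P 0"
    unfolding diag_shift_def by simp
  then have "quad_form J P w = quad_form J (diag_shift P b) w + b * (\<Sum>l\<in>J. (w l)^2)"
    using quad_form_diag_shift[OF assms(1), of P 0 w b] by simp
  moreover have "0 \<le> quad_form J (diag_shift P b) w"
    using pos_def_imp_pos_semidef[OF assms(2)] unfolding pos_semidef_on_def by blast
  moreover have "c * (\<Sum>l\<in>J. (w l)^2) \<le> b * (\<Sum>l\<in>J. (w l)^2)"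
    using assms(3) by (intro mult_right_mono sum_nonneg) auto
  ultimately show ?thesis
    by linarith
qed

text \<open>Start at \<open>b\<^sub>0 = (1 - e) n / m\<close> with potential \<open>U = -m / (1 - e) = -n / b\<^sub>0\<close>; the step
  \<open>\<delta> = 1 / (-m - U) = (1 - e) / (m e)\<close> lowers the barrier by at most \<open>e (1 - e) n / m\<close> over
  \<open>j \<le> e\<^sup>2 n\<close> steps.\<close>

lemma barrier_parameters:
  fixes m n e j :: real
  assumes "0 < m" "0 < n" "0 < e" "e < 1" "j \<le> e^2 * n"
  defines "b0 \<equiv> (1 - e) * (n / m)" and "U \<equiv> - m / (1 - e)" and "\<delta> \<equiv> (1 - e) / (m * e)"
  shows "0 < - m - U" "\<delta> * (- m - U) = 1" "0 < b0" "- n / b0 \<le> U" "b0 \<le> \<delta> * n" "j \<le> n"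
    and "(1 - e)^2 * (n / m) \<le> b0 - j * \<delta>"
proof -
  have K: "- m - U = m * e / (1 - e)"
    unfolding U_def using assms(4) by (simp add: field_simps)
  then show "0 < - m - U"
    using assms(1,3,4) by simp
  show "\<delta> * (- m - U) = 1"
    unfolding K \<delta>_def using assms(1,3,4) by (simp add: field_simps)
  show "0 < b0"
    unfolding b0_def using assms(1-4) by simp
  show "- n / b0 \<le> U"
    unfolding b0_def U_def using assms(1,2,4) by (simp add: field_simps)
  have "b0 * e \<le> b0 * 1"
    using \<open>0 < b0\<close> assms(4) by (intro mult_left_mono) auto
  moreover have "\<delta> * n = b0 / e"
    unfolding b0_def \<delta>_def by simp
  ultimately show "b0 \<le> \<delta> * n"
    using assms(3) by (simp add: le_divide_eq)
  have "e^2 * n \<le> 1 * n"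
    using assms(2-4) by (intro mult_right_mono) (auto simp: power_le_one)
  then show "j \<le> n"
    using assms(5) by simp
  have "j * \<delta> \<le> e^2 * n * \<delta>"
    using assms(1,3-5) unfolding \<delta>_def by (intro mult_right_mono) auto
  also have "\<dots> = e * (1 - e) * (n / m)"
    unfolding \<delta>_def using assms(1,3) by (simp add: field_simps power2_eq_square)
  moreover have "(1 - e)^2 * q = (1 - e) * q - e * (1 - e) * q" for q :: real
    by (simp add: power2_eq_square algebra_simps)
  note this[of "n / m"]
  ultimately show "(1 - e)^2 * (n / m) \<le> b0 - j * \<delta>"
    unfolding b0_def by linarith
qed

text \<open>After \<open>k - 1\<close> moving steps a final step at the same barrier adds the last index.\<close>

theorem restricted_invertibility_projection:
  fixes P :: "'a::finite \<Rightarrow> 'a \<Rightarrow> real"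
  assumes sP: "sym_matrix P" and idem: "\<And>a b. (\<Sum>l\<in>UNIV. P a l * P l b) = P a b"
    and trace: "(\<Sum>i\<in>UNIV. P i i) = n" and "0 < n" and "0 < e" "e < 1"
    and "1 \<le> k" "real k - 1 \<le> e^2 * n"
  shows "\<exists>J. card J = k \<and>
    (\<forall>w. (1 - e)^2 * (n / real CARD('a)) * (\<Sum>i\<in>J. (w i)^2) \<le> quad_form J P w)"
proof -
  define m where "m = real CARD('a)"
  define b0 where "b0 = (1 - e) * (n / m)"
  define U where "U = - m / (1 - e)"
  define \<delta> where "\<delta> = (1 - e) / (m * e)"
  define b where "b = b0 - real (k - 1) * \<delta>"
  have "real (k - 1) \<le> e^2 * n"
    using assms(7,8) by (simp add: of_nat_diff)
  moreover have "0 < m"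
    unfolding m_def by simp
  ultimately have params: "0 < - m - U" "\<delta> * (- m - U) = 1" "- n / b0 \<le> U" "b0 \<le> \<delta> * n"
      "real (k - 1) \<le> n" "(1 - e)^2 * (n / m) \<le> b"
    using barrier_parameters[of m n e "real (k - 1)"] \<open>0 < n\<close> \<open>0 < e\<close> \<open>e < 1\<close>
    unfolding b0_def U_def \<delta>_def b_def by simp_all
  moreover have "0 < (1 - e)^2 * (n / m)"
    using \<open>0 < n\<close> \<open>0 < m\<close> \<open>e < 1\<close> by simp
  ultimately have "0 < b"
    by linarith
  obtain J where J: "card J = k - 1" "barrier_state P n U J b"
    using barrier_iterate[OF sP idem trace params(3) params(1,2)[unfolded m_def] params(4) _ params(5)]
      \<open>0 < b\<close> unfolding b_def by blast
  obtain i where i: "i \<notin> J" "pos_def_on (insert i J) (diag_shift P b)"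
    using barrier_final_step[OF sP idem trace J(2) params(1)[unfolded m_def] \<open>0 < b\<close>] by blast
  have "card (insert i J) = k"
    using i(1) J(1) \<open>1 \<le> k\<close> by simp
  then show ?thesis
    using quad_form_ge_of_pos_def_diag_shift[OF finite i(2) params(6)] unfolding m_def by blast
qed

section \<open>Orthonormal columns\<close>

lemma quad_form_UNIV_eq:
  fixes X :: "'a::finite \<Rightarrow> 'a \<Rightarrow> real"
  assumes "\<And>i. i \<notin> J \<Longrightarrow> w i = 0"
  shows "quad_form UNIV X w = quad_form J X w"
proof -
  have "quad_form UNIV X w = (\<Sum>i\<in>UNIV. \<Sum>j\<in>J. w i * X i j * w j)"
    unfolding quad_form_def by (intro sum.cong refl sum.mono_neutral_right) (auto simp: assms)
  also have "\<dots> = quad_form J X w"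
    unfolding quad_form_def by (intro sum.mono_neutral_right) (auto simp: assms)
  finally show ?thesis .
qed

lemma power2_norm_vec: "(norm (x :: real^'n))^2 = (\<Sum>i\<in>UNIV. (x $ i)^2)"
  by (simp add: norm_vec_def L2_set_def sum_nonneg)

lemma norm_transpose_mult_sq:
  fixes A :: "real^'n^'m"
  shows "(norm (transpose A *v w))^2 = quad_form UNIV (\<lambda>i j. row i A \<bullet> row j A) (\<lambda>i. w $ i)"
proof -
  have "(norm (transpose A *v w))^2 = (\<Sum>c\<in>UNIV. (\<Sum>i\<in>UNIV. A $ i $ c * w $ i)^2)"
    unfolding power2_norm_vec by (simp add: matrix_vector_mult_def transpose_def)
  also have "\<dots> = (\<Sum>c\<in>UNIV. \<Sum>i\<in>UNIV. \<Sum>j\<in>UNIV. w $ i * (A $ i $ c * A $ j $ c) * w $ j)"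
    unfolding power2_eq_square sum_product by (intro sum.cong refl) (simp only: mult_ac)
  also have "\<dots> = (\<Sum>i\<in>UNIV. \<Sum>j\<in>UNIV. \<Sum>c\<in>UNIV. w $ i * (A $ i $ c * A $ j $ c) * w $ j)"
    by (subst sum.swap) (intro sum.cong refl, rule sum.swap)
  also have "\<dots> = quad_form UNIV (\<lambda>i j. row i A \<bullet> row j A) (\<lambda>i. w $ i)"
    unfolding quad_form_def inner_vec_def row_def
    by (simp add: sum_distrib_left sum_distrib_right)
  finally show ?thesis .
qed

lemma column_submatrix_of_orthogonal_orthonormal:
  fixes A :: "real^'n^'m"
  assumes "is_column_submatrix_of_orthogonal A"
  shows "(\<Sum>l\<in>UNIV. A $ l $ c * A $ l $ c') = (if c = c' then 1 else 0)"
proof -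
  obtain Q :: "real^'m^'m" and \<sigma> :: "'n \<Rightarrow> 'm"
    where Q: "orthogonal_matrix Q" "inj \<sigma>" "\<And>i j. A $ i $ j = Q $ i $ \<sigma> j"
    using assms unfolding is_column_submatrix_of_orthogonal_def by blast
  have "(transpose Q ** Q) $ \<sigma> c $ \<sigma> c' = mat 1 $ \<sigma> c $ \<sigma> c'"
    using Q(1) unfolding orthogonal_matrix by simp
  then show ?thesis
    using Q(2) by (simp add: Q(3) matrix_matrix_mult_def transpose_def mat_def inj_eq)
qed

lemma gram_rows_projection:
  fixes A :: "real^'n^'m"
  assumes "is_column_submatrix_of_orthogonal A"
  defines "P \<equiv> \<lambda>i j. row i A \<bullet> row j A"
  shows "sym_matrix P"
    and "(\<Sum>l\<in>UNIV. P a l * P l b) = P a b"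
    and "(\<Sum>i\<in>UNIV. P i i) = real CARD('n)"
proof -
  note orth = column_submatrix_of_orthogonal_orthonormal[OF assms(1)]
  have P: "P i j = (\<Sum>c\<in>UNIV. A $ i $ c * A $ j $ c)" for i j
    unfolding P_def inner_vec_def row_def by simp
  show "sym_matrix P"
    unfolding sym_matrix_def P_def by (simp add: inner_commute)
  have "(\<Sum>l\<in>UNIV. P a l * P l b) =
      (\<Sum>l\<in>UNIV. \<Sum>c\<in>UNIV. \<Sum>c'\<in>UNIV. (A $ a $ c * A $ b $ c') * (A $ l $ c * A $ l $ c'))"
    unfolding P sum_product by (intro sum.cong refl) (simp only: mult_ac)
  also have "\<dots> = (\<Sum>c\<in>UNIV. \<Sum>c'\<in>UNIV. \<Sum>l\<in>UNIV. (A $ a $ c * A $ b $ c') * (A $ l $ c * A $ l $ c'))"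
    by (subst sum.swap) (intro sum.cong refl, rule sum.swap)
  also have "\<dots> = P a b"
    unfolding P sum_distrib_left[symmetric] orth by (simp add: if_distrib[of "\<lambda>x. _ * x"] cong: if_cong)
  finally show "(\<Sum>l\<in>UNIV. P a l * P l b) = P a b" .
  have "(\<Sum>i\<in>UNIV. P i i) = (\<Sum>c\<in>UNIV. \<Sum>i\<in>UNIV. A $ i $ c * A $ i $ c)"
    unfolding P by (rule sum.swap)
  then show "(\<Sum>i\<in>UNIV. P i i) = real CARD('n)"
    using orth by simp
qed

theorem corollary2:
  fixes d :: real and A :: "real^'n^'m"
  assumes "0 < d" and "d < 1"
    and "is_column_submatrix_of_orthogonal A"
    and "\<forall>i k. norm (row i A) = norm (row k A)"
  shows "\<exists>J :: 'm set. real (card J) \<ge> (1 - d) * real CARD('n) \<and>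
           (\<forall>w :: real^'m. (\<forall>i. i \<notin> J \<longrightarrow> w $ i = 0) \<longrightarrow>
              Cd d * (real CARD('n) / real CARD('m)) * (norm w)^2
                \<le> (norm (transpose A *v w))^2)"
proof -
  define n where "n = real CARD('n)"
  define k where "k = nat \<lceil>(1 - d) * n\<rceil>"
  have "0 < (1 - d) * n"
    using assms(2) unfolding n_def by simp
  then have k: "real k = of_int \<lceil>(1 - d) * n\<rceil>" "1 \<le> k" "real k - 1 \<le> (sqrt (1 - d))^2 * n"
    using assms(2) unfolding k_def by auto linarith+
  obtain J where J: "card J = k" and bound: "\<And>w. Cd d * (n / real CARD('m)) * (\<Sum>i\<in>J. (w i)^2)
      \<le> quad_form J (\<lambda>i j. row i A \<bullet> row j A) w"
    using restricted_invertibility_projection[OF gram_rows_projection[OF assms(3)], of "sqrt (1 - d)" k]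
      k(2,3) assms(1,2) unfolding Cd_def n_def by auto
  have "Cd d * (n / real CARD('m)) * (norm w)^2 \<le> (norm (transpose A *v w))^2"
    if "\<forall>i. i \<notin> J \<longrightarrow> w $ i = 0" for w :: "real^'m"
  proof -
    have "(norm w)^2 = (\<Sum>i\<in>J. (w $ i)^2)"
      unfolding power2_norm_vec using that by (intro sum.mono_neutral_right) auto
    then show ?thesis
      using bound[of "\<lambda>i. w $ i"] quad_form_UNIV_eq[of J "\<lambda>i. w $ i"] that
      unfolding norm_transpose_mult_sq by auto
  qed
  moreover have "(1 - d) * n \<le> real (card J)"
    using J k(1) by linarith
  ultimately show ?thesis
    unfolding n_def by blast
qed

end
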